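(* Let $B$ be a commutative ring with identity, $A$ a dense subring of $B$, and $M$ a maximal ideal of $B$. Then there is no prime ideal $P$ of $B$ such that $M\cap A\subsetneq P\cap A$.
   Context: All rings are commutative with identity; subrings contain the identity. A subring $A$ of $B$ is dense in $B$ if for every ideal $I$ of $B$ and every $b\in B\setminus \operatorname{rad}(I)$ there exists $a\in B\setminus\operatorname{rad}(I)$ with $ab\in A$. *)

theory Defs
  imports "HOL-Algebra.Algebra"
begin

definition ring_radical :: "('a, 'm) ring_scheme \<Rightarrow> 'a set \<Rightarrow> 'a set" where
  "ring_radical B I = {x \<in> carrier B. \<exists>n::nat. x [^]\<^bsub>B\<^esub> n \<in> I}"

definition dense_subring :: "'a set \<Rightarrow> ('a, 'm) ring_scheme \<Rightarrow> bool" where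
  "dense_subring A B \<longleftrightarrow> subring A B \<and>
     (\<forall>I. ideal I B \<longrightarrow>
        (\<forall>b \<in> carrier B - ring_radical B I.
           \<exists>a \<in> carrier B - ring_radical B I. a \<otimes>\<^bsub>B\<^esub> b \<in> A))"

end

theory Submission
  imports Defs
begin

text \<open>If a prime ideal \<open>P\<close> contained an element \<open>x \<notin> M\<close>, maximality of \<open>M\<close> would give
  \<open>\<one> = m \<oplus> r \<otimes> x\<close> with \<open>m \<in> M\<close>, so \<open>m \<notin> P\<close>. Since prime ideals are radical, density
  yields \<open>a \<notin> P\<close> with \<open>a \<otimes> m \<in> A\<close>; then \<open>a \<otimes> m \<in> M \<inter> A\<close>, which lies in \<open>P\<close> as soon as
  \<open>M \<inter> A \<subseteq> P \<inter> A\<close>, contradicting primality. Hence \<open>M \<inter> A \<subseteq> P\<close> forces \<open>P \<subseteq> M\<close>.\<close>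

lemma (in primeideal) pow_mem_imp_mem:
  assumes "a \<in> carrier R" and "a [^] (n::nat) \<in> I"
  shows "a \<in> I"
  using assms(2)
proof (induction n)
  case 0
  then show ?case
    using I_notcarr one_imp_carrier by simp
next
  case (Suc n)
  then have "a [^] n \<otimes> a \<in> I" by simp
  then show ?case
    using Suc.IH I_prime assms(1) by (meson nat_pow_closed)
qed

lemma ring_radical_primeideal:
  assumes "primeideal P B"
  shows "ring_radical B P = P"
proof (intro equalityI subsetI)
  interpret primeideal P B by fact
  fix a
  show "a \<in> P" if "a \<in> ring_radical B P"
  proof -
    from that obtain n :: nat where "a \<in> carrier B" and "a [^]\<^bsub>B\<^esub> n \<in> P"
      unfolding ring_radical_def by blast
    then show ?thesis
      by (rule pow_mem_imp_mem)
  qed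
  show "a \<in> ring_radical B P" if "a \<in> P"
  proof -
    have "a \<in> carrier B" and "a [^]\<^bsub>B\<^esub> (1::nat) \<in> P"
      using that Icarr by simp_all
    then show ?thesis
      unfolding ring_radical_def by blast
  qed
qed

lemma dense_subring_primeideal:
  assumes "dense_subring A B" and "primeideal P B" and "b \<in> carrier B - P"
  shows "\<exists>a \<in> carrier B - P. a \<otimes>\<^bsub>B\<^esub> b \<in> A"
proof -
  have "\<forall>b \<in> carrier B - ring_radical B P. \<exists>a \<in> carrier B - ring_radical B P. a \<otimes>\<^bsub>B\<^esub> b \<in> A"
    using assms(1) primeideal.axioms(1)[OF assms(2)] unfolding dense_subring_def by blast
  then show ?thesis
    using assms(3) unfolding ring_radical_primeideal[OF assms(2)] by blast
qed

lemma (in maximalideal) comaximal_element: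
  assumes "cring R" and "x \<in> carrier R" and "x \<notin> I"
  shows "\<exists>m \<in> I. \<exists>r \<in> carrier R. m \<oplus> r \<otimes> x = \<one>"
proof -
  interpret cring R by fact
  define J where "J = I <+>\<^bsub>R\<^esub> PIdl x"
  have J_ideal: "ideal J R"
    unfolding J_def by (rule add_ideals[OF is_ideal cgenideal_ideal[OF assms(2)]])
  have J_eq: "J = {m \<oplus> r \<otimes> x | m r. m \<in> I \<and> r \<in> carrier R}"
    unfolding J_def set_add_def' cgenideal_def by blast
  have "I \<subseteq> J"
  proof
    fix m assume "m \<in> I"
    then have "m = m \<oplus> \<zero> \<otimes> x"
      using assms(2) by simp
    with \<open>m \<in> I\<close> show "m \<in> J"
      unfolding J_eq by blast
  qed
  moreover have "x \<in> J"
  proof -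
    have "x = \<zero> \<oplus> \<one> \<otimes> x" and "\<zero> \<in> I"
      using assms(2) by simp_all
    then show ?thesis
      unfolding J_eq by blast
  qed
  ultimately have "J = carrier R"
    using I_maximal[OF J_ideal] ideal.Icarr[OF J_ideal] assms(3) by blast
  then have "\<one> \<in> J"
    by simp
  then show ?thesis
    unfolding J_eq by (smt (verit) mem_Collect_eq)
qed

lemma dense_subring_primeideal_subset_maximalideal:
  fixes B (structure)
  assumes "cring B" and "dense_subring A B" and "maximalideal M B" and "primeideal P B"
    and "M \<inter> A \<subseteq> P"
  shows "P \<subseteq> M"
proof
  interpret M: maximalideal M B by fact
  interpret P: primeideal P B by fact
  fix x assume "x \<in> P"
  show "x \<in> M"
  proof (rule ccontr)
    assume "x \<notin> M"
    then obtain m r where "m \<in> M" and "r \<in> carrier B" and one: "m \<oplus> r \<otimes> x = \<one>"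
      using M.comaximal_element[OF assms(1) P.Icarr[OF \<open>x \<in> P\<close>]] by blast
    have m_carrier: "m \<in> carrier B"
      using M.Icarr[OF \<open>m \<in> M\<close>] .
    have "m \<notin> P"
    proof
      assume "m \<in> P"
      moreover have "r \<otimes> x \<in> P"
        using P.I_l_closed[OF \<open>x \<in> P\<close> \<open>r \<in> carrier B\<close>] .
      ultimately have "\<one> \<in> P"
        using P.a_closed one by metis
      then show False
        using P.I_notcarr P.one_imp_carrier by simp
    qed
    then obtain a where "a \<in> carrier B" and "a \<notin> P" and "a \<otimes> m \<in> A"
      using dense_subring_primeideal[OF assms(2,4)] m_carrier by blast
    moreover have "a \<otimes> m \<in> M"
      using M.I_l_closed[OF \<open>m \<in> M\<close> \<open>a \<in> carrier B\<close>] .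
    ultimately have "a \<otimes> m \<in> P"
      using assms(5) by blast
    then show False
      using P.I_prime[OF \<open>a \<in> carrier B\<close> m_carrier] \<open>a \<notin> P\<close> \<open>m \<notin> P\<close> by blast
  qed
qed

theorem corollary4p3:
  fixes B (structure) and A :: "'a set" and M :: "'a set"
  assumes "cring B"
    and "dense_subring A B"
    and "maximalideal M B"
  shows "\<not> (\<exists>P. primeideal P B \<and> M \<inter> A \<subset> P \<inter> A)"
proof
  assume "\<exists>P. primeideal P B \<and> M \<inter> A \<subset> P \<inter> A"
  then obtain P where "primeideal P B" and "M \<inter> A \<subset> P \<inter> A" by blast
  then have "P \<subseteq> M"
    using dense_subring_primeideal_subset_maximalideal[OF assms] by blast
  with \<open>M \<inter> A \<subset> P \<inter> A\<close> show False by blast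
qed

end
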